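(* Let $n$ and $k$ be positive integers with $n\ge3k$. Then $B_2(n,k,2k;3)\ge 2^{\lfloor (n-k)/k\rfloor}$.
   Context: For a prime power $q$, $\mathcal{G}_q(n,k)$ denotes the set of all $k$-dimensional subspaces of $\mathbb{F}_q^n$. An $\alpha$-$(n,k,\delta)_q^c$ covering Grassmannian code is a subset $\mathcal{C}\subseteq\mathcal{G}_q(n,k)$ (no repeated codewords) such that every set of $\alpha$ distinct codewords of $\mathcal{C}$ spans a subspace of $\mathbb{F}_q^n$ of dimension at least $k+\delta$. $B_q(n,k,\delta;\alpha)$ denotes the maximum size of an $\alpha$-$(n,k,\delta)_q^c$ code. *)

theory Defs
  imports "HOL-Analysis.Analysis" "HOL-Library.Z2"
begin

text \<open>The ambient space F_q^n is rendered as ('a::field)^'n with CARD('n) = n.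
  Grassmannian: all k-dimensional subspaces.\<close>
definition grassmannian :: "nat \<Rightarrow> (('a::field)^'n) set set" where
  "grassmannian k = {U. vec.subspace U \<and> vec.dim U = k}"

definition covering_code :: "nat \<Rightarrow> nat \<Rightarrow> nat \<Rightarrow> (('a::field)^'n) set set \<Rightarrow> bool" where
  "covering_code k \<delta> \<alpha> C \<longleftrightarrow> C \<subseteq> grassmannian k \<and>
     (\<forall>S \<subseteq> C. card S = \<alpha> \<longrightarrow> vec.dim (vec.span (\<Union>S)) \<ge> k + \<delta>)"

text \<open>B_q(n,k,delta;alpha): maximum size of such a code (q = CARD('a), n = CARD('n)).\<close>
definition B_max :: "'a::field itself \<Rightarrow> 'n::finite itself \<Rightarrow> nat \<Rightarrow> nat \<Rightarrow> nat \<Rightarrow> nat" where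
  "B_max _ _ k \<delta> \<alpha> = Max {card C | C :: ('a^'n) set set. covering_code k \<delta> \<alpha> C}"

end

theory Submission
  imports Defs
begin

text \<open>Let \<open>m = \<lfloor>(n - k) / k\<rfloor>\<close> and lay out \<open>(m + 1) k\<close> of the coordinates as blocks \<open>0, \<dots>, m\<close> of
  length \<open>k\<close>, coordinate \<open>(i, j)\<close> being position \<open>j\<close> of block \<open>i\<close>. For \<open>X \<subseteq> {1..m}\<close> let \<open>U X\<close> be
  spanned by the \<open>k\<close> vectors \<open>b X j = (\<Sum>i \<in> {0} \<union> X. e (i, j))\<close>, giving \<open>2\<^sup>m\<close> codewords.
  The generators of any three of them are linearly independent over GF(2): in a vanishing sum,
  look at a position \<open>j\<close> that occurs; the coordinate \<open>(0, j)\<close> forces an even number, hence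
  exactly two, of the sets \<open>X\<close> to contribute at position \<open>j\<close>, and a block \<open>i\<close> on which these
  two sets differ yields a nonzero coordinate \<open>(i, j)\<close>. So three codewords span \<open>3k\<close> dimensions.\<close>

instance bit :: finite
proof
  have "(UNIV :: bit set) = {0, 1}"
    using bit.exhaust by auto
  then show "finite (UNIV :: bit set)"
    by (metis finite.emptyI finite.insertI)
qed

lemma sum_bit_eq_card:
  fixes f :: "'a \<Rightarrow> bit"
  assumes "finite A"
  shows "sum f A = of_nat (card {x \<in> A. f x = 1})"
proof -
  have "sum f A = sum f {x \<in> A. f x = 1}"
    by (rule sum.mono_neutral_right) (use assms in auto)
  also have "\<dots> = of_nat (card {x \<in> A. f x = 1})"
    by simp
  finally show ?thesis .
qed

lemma vec_independent_bit_if_subsums_nonzero: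
  fixes A :: "(bit^'n) set"
  assumes "\<And>T. T \<subseteq> A \<Longrightarrow> T \<noteq> {} \<Longrightarrow> sum id T \<noteq> 0"
  shows "vec.independent A"
  unfolding vec.independent_explicit_finite_subsets
proof (intro allI impI ballI)
  fix T u v
  assume T: "T \<subseteq> A" "finite T" and combination: "(\<Sum>v\<in>T. u v *s v) = 0" and "v \<in> T"
  define T1 where "T1 = {v \<in> T. u v = 1}"
  have "(\<Sum>v\<in>T. u v *s v) = (\<Sum>v\<in>T1. u v *s v)"
    unfolding T1_def by (rule sum.mono_neutral_right) (use T in auto)
  also have "\<dots> = sum id T1"
    unfolding T1_def by (rule sum.cong) auto
  finally have "sum id T1 = 0"
    using combination by simp
  then have "T1 = {}"
    using assms[of T1] T unfolding T1_def by blast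
  then show "u v = 0"
    using \<open>v \<in> T\<close> unfolding T1_def by auto
qed

lemma card_le_B_max:
  assumes "covering_code k \<delta> \<alpha> (C :: ('a::{field,finite}^'n) set set)"
  shows "card C \<le> B_max TYPE('a) TYPE('n) k \<delta> \<alpha>"
  unfolding B_max_def
proof (rule Max_ge)
  have "{card C | C :: ('a^'n) set set. covering_code k \<delta> \<alpha> C} \<subseteq> card ` (UNIV :: ('a^'n) set set set)"
    by blast
  then show "finite {card C | C :: ('a^'n) set set. covering_code k \<delta> \<alpha> C}"
    by (rule finite_subset) simp
qed (use assms in blast)

context
  fixes I :: "'i set" and B :: "'i \<Rightarrow> ('a::field^'n) set" and k :: nat
  assumes k_pos: "0 < k"
    and card_B: "\<And>i. i \<in> I \<Longrightarrow> card (B i) = k"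
    and disjoint_B: "\<And>i j. i \<in> I \<Longrightarrow> j \<in> I \<Longrightarrow> i \<noteq> j \<Longrightarrow> B i \<inter> B j = {}"
begin

lemma card_Union_bases:
  assumes "finite J" "J \<subseteq> I"
  shows "card (\<Union> (B ` J)) = card J * k"
proof -
  have "card (\<Union> (B ` J)) = (\<Sum>i\<in>J. card (B i))"
  proof (rule card_UN_disjoint[OF \<open>finite J\<close>])
    show "\<forall>i\<in>J. finite (B i)"
      using assms card_B k_pos by (metis card.infinite not_gr_zero subsetD)
    show "\<forall>i\<in>J. \<forall>j\<in>J. i \<noteq> j \<longrightarrow> B i \<inter> B j = {}"
      using assms disjoint_B by blast
  qed
  also have "\<dots> = card J * k"
    using assms card_B by (simp add: subset_iff)
  finally show ?thesis .
qed

lemma dim_span_Union_bases: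
  assumes "finite J" "J \<subseteq> I" "vec.independent (\<Union> (B ` J))"
  shows "vec.dim (vec.span (\<Union> (B ` J))) = card J * k"
  by (metis assms card_Union_bases vec.dim_span_eq_card_independent)

lemma inj_on_span_bases:
  assumes "\<And>i j. i \<in> I \<Longrightarrow> j \<in> I \<Longrightarrow> vec.independent (\<Union> (B ` {i, j}))"
  shows "inj_on (\<lambda>i. vec.span (B i)) I"
proof (rule inj_onI, rule ccontr)
  fix i j
  assume ij: "i \<in> I" "j \<in> I" "i \<noteq> j" and same_span: "vec.span (B i) = vec.span (B j)"
  have "\<Union> (B ` {i, j}) \<subseteq> vec.span (B i)"
    using same_span vec.span_superset[of "B i"] vec.span_superset[of "B j"] by auto
  then have "card (\<Union> (B ` {i, j})) \<le> vec.dim (vec.span (B i))"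
    using assms ij by (intro vec.independent_card_le_dim) auto
  also have "\<dots> = k"
    using dim_span_Union_bases[of "{i}"] assms[of i i] ij by simp
  finally show False
    using card_Union_bases[of "{i, j}"] ij k_pos by simp
qed

lemma covering_code_span_image:
  assumes "2 \<le> \<alpha>"
    and independent_B: "\<And>J. finite J \<Longrightarrow> J \<subseteq> I \<Longrightarrow> card J \<le> \<alpha> \<Longrightarrow> vec.independent (\<Union> (B ` J))"
  shows "covering_code k ((\<alpha> - 1) * k) \<alpha> ((\<lambda>i. vec.span (B i)) ` I)"
  unfolding covering_code_def
proof (intro conjI allI impI)
  show "(\<lambda>i. vec.span (B i)) ` I \<subseteq> grassmannian k"
    unfolding grassmannian_def
    using dim_span_Union_bases[of "{i}" for i] independent_B[of "{i}" for i] assms(1)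
    by (auto simp: vec.subspace_span)
next
  fix S
  assume S: "S \<subseteq> (\<lambda>i. vec.span (B i)) ` I" "card S = \<alpha>"
  have inj: "inj_on (\<lambda>i. vec.span (B i)) I"
  proof (rule inj_on_span_bases)
    fix i j
    assume "i \<in> I" "j \<in> I"
    then show "vec.independent (\<Union> (B ` {i, j}))"
      using assms(1) by (intro independent_B) (auto simp: card_insert_if)
  qed
  define J where "J = {i \<in> I. vec.span (B i) \<in> S}"
  have S_eq: "S = (\<lambda>i. vec.span (B i)) ` J"
    using S(1) unfolding J_def by auto
  have "J \<subseteq> I"
    unfolding J_def by blast
  have "card S = card J"
    unfolding S_eq using inj_on_subset[OF inj \<open>J \<subseteq> I\<close>] by (rule card_image)
  then have card_J: "card J = \<alpha>"
    using S(2) by simp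
  then have J: "finite J" "J \<subseteq> I"
    using assms(1) card.infinite \<open>J \<subseteq> I\<close> by fastforce+
  have "\<Union> (B ` J) \<subseteq> vec.span (\<Union> S)"
    unfolding S_eq by (auto intro: UN_I vec.span_base)
  then have "card (\<Union> (B ` J)) \<le> vec.dim (vec.span (\<Union> S))"
    using independent_B J card_J by (intro vec.independent_card_le_dim) auto
  then show "k + (\<alpha> - 1) * k \<le> vec.dim (vec.span (\<Union> S))"
    using card_Union_bases[OF J] card_J assms(1) by (simp add: algebra_simps)
qed

end

definition block_vector :: "(nat \<times> nat \<Rightarrow> 'n) \<Rightarrow> nat set \<Rightarrow> nat \<Rightarrow> bit^'n" where
  "block_vector g X j = (\<chi> p. if p \<in> g ` (insert 0 X \<times> {j}) then 1 else 0)"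

definition block_basis :: "(nat \<times> nat \<Rightarrow> 'n) \<Rightarrow> nat \<Rightarrow> nat set \<Rightarrow> (bit^'n) set" where
  "block_basis g k X = block_vector g X ` {..<k}"

context
  fixes g :: "nat \<times> nat \<Rightarrow> 'n::finite" and k m :: nat
  assumes g_inj: "inj_on g ({..m} \<times> {..<k})"
begin

lemma block_vector_nth:
  assumes "X \<subseteq> {1..m}" "j < k" "i \<le> m" "j' < k"
  shows "block_vector g X j $ g (i, j') = (if j' = j \<and> i \<in> insert 0 X then 1 else 0)"
proof -
  have "g (i, j') \<in> g ` (insert 0 X \<times> {j}) \<longleftrightarrow> (i, j') \<in> insert 0 X \<times> {j}"
    by (rule inj_on_image_mem_iff[OF g_inj]) (use assms in auto)
  then show ?thesis
    by (simp add: block_vector_def)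
qed

lemma block_vector_eq_iff:
  assumes "X \<subseteq> {1..m}" "Y \<subseteq> {1..m}" "j < k" "j' < k"
  shows "block_vector g X j = block_vector g Y j' \<longleftrightarrow> X = Y \<and> j = j'"
proof
  assume eq: "block_vector g X j = block_vector g Y j'"
  have "block_vector g Y j' $ g (0, j) = 1"
    using block_vector_nth[of X j 0 j] eq assms by simp
  then have "j = j'"
    using block_vector_nth[of Y j' 0 j] assms by (simp split: if_splits)
  have "i \<in> X \<longleftrightarrow> i \<in> Y" if "i \<in> {1..m}" for i
    using block_vector_nth[of X j i j] block_vector_nth[of Y j i j] eq \<open>j = j'\<close> assms that
    by (auto split: if_splits)
  then have "X = Y"
    using assms(1,2) by blast
  with \<open>j = j'\<close> show "X = Y \<and> j = j'"
    by simp
qed simp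

lemma card_block_basis:
  assumes "X \<subseteq> {1..m}"
  shows "card (block_basis g k X) = k"
proof -
  have "inj_on (block_vector g X) {..<k}"
    using block_vector_eq_iff[OF assms assms] by (auto intro: inj_onI)
  then show ?thesis
    unfolding block_basis_def by (simp add: card_image)
qed

lemma disjoint_block_bases:
  assumes "X \<subseteq> {1..m}" "Y \<subseteq> {1..m}" "X \<noteq> Y"
  shows "block_basis g k X \<inter> block_basis g k Y = {}"
  using block_vector_eq_iff[OF assms(1,2)] assms(3) unfolding block_basis_def by auto

lemma sum_block_vectors_nth:
  assumes S: "S \<subseteq> Pow {1..m}" and T: "T \<subseteq> \<Union> (block_basis g k ` S)"
    and "i \<le> m" "j < k"
  shows "sum id T $ g (i, j) = of_nat (card {Y \<in> S. block_vector g Y j \<in> T \<and> i \<in> insert 0 Y})"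
proof -
  have "finite S"
    using S finite_subset by blast
  then have "finite T"
    using T finite_subset unfolding block_basis_def by blast
  have "sum id T $ g (i, j) = (\<Sum>v\<in>T. v $ g (i, j))"
    by simp
  also have "\<dots> = of_nat (card {v \<in> T. v $ g (i, j) = 1})"
    using \<open>finite T\<close> by (rule sum_bit_eq_card)
  also have "{v \<in> T. v $ g (i, j) = 1} = (\<lambda>Y. block_vector g Y j) ` {Y \<in> S. block_vector g Y j \<in> T \<and> i \<in> insert 0 Y}"
  proof (intro equalityI subsetI)
    fix v
    assume v: "v \<in> {v \<in> T. v $ g (i, j) = 1}"
    then obtain Y j' where Y: "Y \<in> S" "j' < k" "v = block_vector g Y j'"
      using T unfolding block_basis_def by blast
    then have "j' = j \<and> i \<in> insert 0 Y"
      using v block_vector_nth[of Y j' i j] S assms(3,4) by (auto split: if_splits)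
    then show "v \<in> (\<lambda>Y. block_vector g Y j) ` {Y \<in> S. block_vector g Y j \<in> T \<and> i \<in> insert 0 Y}"
      using v Y by auto
  next
    fix v
    assume "v \<in> (\<lambda>Y. block_vector g Y j) ` {Y \<in> S. block_vector g Y j \<in> T \<and> i \<in> insert 0 Y}"
    then show "v \<in> {v \<in> T. v $ g (i, j) = 1}"
      using block_vector_nth S assms(3,4) by auto
  qed
  also have "card \<dots> = card {Y \<in> S. block_vector g Y j \<in> T \<and> i \<in> insert 0 Y}"
  proof (rule card_image, rule inj_onI)
    fix X Y
    assume "X \<in> {Y \<in> S. block_vector g Y j \<in> T \<and> i \<in> insert 0 Y}"
      "Y \<in> {Y \<in> S. block_vector g Y j \<in> T \<and> i \<in> insert 0 Y}"
      "block_vector g X j = block_vector g Y j"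
    then show "X = Y"
      using block_vector_eq_iff[of X Y j j] S assms(4) by blast
  qed
  finally show ?thesis .
qed

lemma independent_block_bases:
  assumes S: "S \<subseteq> Pow {1..m}" "card S \<le> 3"
  shows "vec.independent (\<Union> (block_basis g k ` S))"
proof (rule vec_independent_bit_if_subsums_nonzero)
  fix T
  assume T: "T \<subseteq> \<Union> (block_basis g k ` S)" "T \<noteq> {}"
  then obtain X j where X: "X \<in> S" "j < k" "block_vector g X j \<in> T"
    unfolding block_basis_def by blast
  define S_j where "S_j = {Y \<in> S. block_vector g Y j \<in> T}"
  have sum_nth: "sum id T $ g (i, j) = of_nat (card {Y \<in> S_j. i \<in> insert 0 Y})" if "i \<le> m" for i
    using sum_block_vectors_nth[OF S(1) T(1) that X(2)] unfolding S_j_def by (simp add: conj_ac)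
  show "sum id T \<noteq> 0"
  proof
    assume zero: "sum id T = 0"
    have "finite S"
      using S(1) finite_subset by blast
    then have "card S_j \<le> 3" "card S_j \<noteq> 0"
      using S(2) X card_mono[of S S_j] unfolding S_j_def by auto
    then have "card S_j \<in> {1, 2, 3}"
      by auto
    moreover have "of_nat (card S_j) = (0::bit)"
      using sum_nth[of 0, unfolded zero] by simp
    ultimately have "card S_j = 2"
      by auto
    then obtain Y Z where YZ: "S_j = {Y, Z}" "Y \<noteq> Z"
      by (auto simp: card_2_iff)
    moreover have "Y \<subseteq> {1..m}" "Z \<subseteq> {1..m}"
      using YZ(1) S(1) unfolding S_j_def by auto
    ultimately obtain i where i: "i \<in> {1..m}" "i \<in> Y \<longleftrightarrow> i \<notin> Z"
      by blast
    have "card {W \<in> S_j. i \<in> insert 0 W} = 1"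
      using YZ i by (auto simp: card_1_singleton_iff)
    then show False
      using sum_nth[of i, unfolded zero] i(1) by simp
  qed
qed

lemma covering_code_block_spans:
  assumes "0 < k"
  defines "C \<equiv> (\<lambda>X. vec.span (block_basis g k X)) ` Pow {1..m}"
  shows "covering_code k (2 * k) 3 C" and "card C = 2 ^ m"
proof -
  have independent: "vec.independent (\<Union> (block_basis g k ` S))"
    if "finite S" "S \<subseteq> Pow {1..m}" "card S \<le> 3" for S
    using independent_block_bases that(2,3) by blast
  have "covering_code k ((3 - 1) * k) 3 C"
    unfolding C_def
    by (rule covering_code_span_image) (use assms card_block_basis disjoint_block_bases independent in auto)
  then show "covering_code k (2 * k) 3 C"
    by simp
  have "vec.independent (\<Union> (block_basis g k ` {X, Y}))" if "X \<subseteq> {1..m}" "Y \<subseteq> {1..m}" for X Y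
    using independent_block_bases[of "{X, Y}"] that by (auto simp: card_insert_if)
  then have "inj_on (\<lambda>X. vec.span (block_basis g k X)) (Pow {1..m})"
    by (intro inj_on_span_bases) (use assms card_block_basis disjoint_block_bases in auto)
  then show "card C = 2 ^ m"
    unfolding C_def by (simp add: card_image card_Pow)
qed

end

theorem mainTheorem12:
  fixes k :: nat
  assumes "k > 0" and "CARD('n::finite) \<ge> 3 * k"
  shows "B_max TYPE(bit) TYPE('n) k (2 * k) 3 \<ge> 2 ^ ((CARD('n) - k) div k)"
proof -
  define m where "m = (CARD('n) - k) div k"
  have "m * k \<le> CARD('n) - k"
    unfolding m_def by (rule div_times_less_eq_dividend)
  then have "card ({..m} \<times> {..<k}) \<le> card (UNIV :: 'n set)"
    using assms by (simp add: card_cartesian_product)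
  then obtain g :: "nat \<times> nat \<Rightarrow> 'n" where "inj_on g ({..m} \<times> {..<k})"
    using card_le_inj[of "{..m} \<times> {..<k}" "UNIV :: 'n set"] by auto
  from covering_code_block_spans[OF this assms(1)] card_le_B_max show ?thesis
    unfolding m_def by metis
qed

end
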